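(* The closure of $\mathrm{Conv}(\mathcal M_{\mathrm{PR}})$ in the topology of componentwise weak convergence equals $\mathcal M_{\mathrm{NS}}$. In particular, for every $\boldsymbol\mu\in\mathcal M_{\mathrm{NS}}$ there exists a sequence $(\boldsymbol\mu_n)_{n\in\mathbb N}$ in $\mathrm{Conv}(\mathcal M_{\mathrm{PR}})$ such that $[\boldsymbol\mu_n]_{x,y}\to[\boldsymbol\mu]_{x,y}$ weakly for all $x,y\in\{0,1\}$; that is, $\mathrm{Conv}(\mathcal M_{\mathrm{PR}})$ is dense in $\mathcal M_{\mathrm{NS}}$.
   Context: A behaviour is a family $\boldsymbol\mu=(\mu_{x,y})_{x,y\in\{0,1\}}$ of Borel probability measures on $\mathbb R\times\mathbb R$, with $[\boldsymbol\mu]_{x,y}:=\mu_{x,y}$; convex combinations are componentwise. It is no-signaling if $\mu_{x,0}(A\times\mathbb R)=\mu_{x,1}(A\times\mathbb R)$ for all $x\in\{0,1\}$ and Borel $A\subseteq\mathbb R$, and $\mu_{0,y}(\mathbb R\times B)=\mu_{1,y}(\mathbb R\times B)$ for all $y\in\{0,1\}$ and Borel $B$; $\mathcal M_{\mathrm{NS}}$ is the set of no-signaling behaviours. $\delta_{a,b}$ is the Dirac measure at $(a,b)\in\mathbb R^2$. A CV PR box of order $k\in\mathbb N$ is a behaviour with $\mu_{x,y}=\frac1k\sum_{j=1}^k\delta_{a_{x,j},\,b_{y,[j+xy]_k}}$, where for each $x,y$ the vectors $\boldsymbol a_x,\boldsymbol b_y\in\mathbb R^k$ each have pairwise distinct components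 and $[\,\cdot\,]_k$ is reduction modulo $k$ into $\{1,\dots,k\}$; $\mathcal M_{\mathrm{PR}}$ is the set of all CV PR boxes of all orders. $\mathrm{Conv}(\mathcal M)$ is the set of all finite convex combinations $\sum_{i=1}^n q_i\boldsymbol\mu_i$ with $\boldsymbol\mu_i\in\mathcal M$, $q_i\ge0$, $\sum_iq_i=1$. A sequence of probability measures $\mu_n$ converges weakly to $\mu$ if $\int f\,d\mu_n\to\int f\,d\mu$ for every bounded continuous $f:\mathbb R^2\to\mathbb R$; behaviours converge if every component does. *)

theory Defs
  imports "HOL-Probability.Probability"
begin

text \<open>A behaviour: inputs x, y range over bool (False = 0, True = 1); each component is a
  Borel probability measure on the plane.\<close>
type_synonym behaviour = "bool \<Rightarrow> bool \<Rightarrow> (real \<times> real) measure"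

definition is_behaviour :: "behaviour \<Rightarrow> bool" where
  "is_behaviour \<mu> \<longleftrightarrow>
     (\<forall>x y. prob_space (\<mu> x y) \<and> sets (\<mu> x y) = sets (borel :: (real \<times> real) measure))"

definition mixture :: "('i \<Rightarrow> real) \<Rightarrow> ('i \<Rightarrow> (real \<times> real) measure) \<Rightarrow> 'i set
                        \<Rightarrow> (real \<times> real) measure" where
  "mixture q M I = measure_of UNIV (sets (borel :: (real \<times> real) measure))
                     (\<lambda>A. \<Sum>i\<in>I. ennreal (q i) * emeasure (M i) A)"

definition no_signaling :: "behaviour \<Rightarrow> bool" where
  "no_signaling \<mu> \<longleftrightarrow> is_behaviour \<mu> \<and>
     (\<forall>x A. A \<in> sets (borel :: real measure) \<longrightarrow>
        emeasure (\<mu> x False) (A \<times> UNIV) = emeasure (\<mu> x True) (A \<times> UNIV)) \<and>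
     (\<forall>y B. B \<in> sets (borel :: real measure) \<longrightarrow>
        emeasure (\<mu> False y) (UNIV \<times> B) = emeasure (\<mu> True y) (UNIV \<times> B))"

text \<open>CV PR box of order k, with indices j shifted to {0..<k} and reduction mod k.\<close>
definition PR_box :: "behaviour \<Rightarrow> bool" where
  "PR_box \<mu> \<longleftrightarrow> (\<exists>(k::nat) (a :: bool \<Rightarrow> nat \<Rightarrow> real) (b :: bool \<Rightarrow> nat \<Rightarrow> real).
     k \<ge> 1 \<and> (\<forall>x. inj_on (a x) {..<k}) \<and> (\<forall>y. inj_on (b y) {..<k}) \<and>
     \<mu> = (\<lambda>x y. mixture (\<lambda>_. 1 / real k)
                 (\<lambda>j. return borel (a x j, b y ((j + of_bool (x \<and> y)) mod k))) {..<k}))"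

definition Conv_PR :: "behaviour set" where
  "Conv_PR = {\<nu>. \<exists>(n::nat) (q :: nat \<Rightarrow> real) (\<mu>s :: nat \<Rightarrow> behaviour).
     (\<forall>i<n. PR_box (\<mu>s i) \<and> q i \<ge> 0) \<and> (\<Sum>i<n. q i) = 1 \<and>
     \<nu> = (\<lambda>x y. mixture q (\<lambda>i. \<mu>s i x y) {..<n})}"

definition weak_conv_plane :: "(nat \<Rightarrow> (real \<times> real) measure) \<Rightarrow> (real \<times> real) measure \<Rightarrow> bool" where
  "weak_conv_plane M N \<longleftrightarrow> (\<forall>f :: real \<times> real \<Rightarrow> real. continuous_on UNIV f \<and> bounded (range f) \<longrightarrow>
      (\<lambda>n. integral\<^sup>L (M n) f) \<longlonglongrightarrow> integral\<^sup>L N f)"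

end

theory Submission
  imports Defs "HOL-Combinatorics.Orbits"
begin

(* Let w x y p be the weight of the outcome pair p for inputs x, y of a no-signaling behaviour
   supported on a finite set. From an outcome of positive weight, no-signaling always lets one
   continue to an outcome of positive weight in the next setting, alternating the party that
   changes its input; by finiteness this chain closes into a cycle, which is the support of a PR
   box. Subtracting that PR box with the largest admissible coefficient keeps the weights
   no-signaling and removes a point of the support, so induction decomposes the behaviour into a
   convex combination of PR boxes.
   An arbitrary no-signaling behaviour is approximated weakly by rounding both outcomes to finer
   and finer finite grids, which preserves no-signaling. Conversely, no-signaling is an equality of
   marginals; it passes to weak limits because a distribution on the real line is determined by
   its integrals of bounded continuous functions (Levy's uniqueness theorem). *)

lemma add_mod_eq_imp_eq:
  fixes i j k c :: nat
  assumes "(i + c) mod k = (j + c) mod k" "i < k" "j < k"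
  shows "i = j"
proof -
  from assms(1) have "i mod k = j mod k" by (auto simp: nat_mod_eq_iff)
  with assms(2,3) show ?thesis by simp
qed

lemma sum_mod_shift:
  fixes g :: "nat \<Rightarrow> 'a::comm_monoid_add"
  shows "(\<Sum>j<k. g ((j + c) mod k)) = (\<Sum>j<k. g j)"
proof -
  have inj: "inj_on (\<lambda>j. (j + c) mod k) {..<k}"
    by (rule inj_onI) (auto intro: add_mod_eq_imp_eq)
  moreover have "(\<lambda>j. (j + c) mod k) ` {..<k} = {..<k}"
    by (rule endo_inj_surj[OF _ _ inj]) auto
  ultimately show ?thesis
    using sum.reindex[OF inj, of g] by simp
qed

lemma finite_invariant_set_has_cycle:
  assumes "finite P" "f ` P \<subseteq> P" "a \<in> P"
  obtains c k where "c \<in> P" "0 < k" "\<And>m m'. (f ^^ m) c = (f ^^ m') c \<longleftrightarrow> m mod k = m' mod k"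
proof -
  have in_P: "(f ^^ j) a \<in> P" for j
    by (induction j) (use assms in auto)
  have "\<not> inj_on (\<lambda>j. (f ^^ j) a) {..card P}"
    using card_inj_on_le[of _ "{..card P}" P] in_P assms(1) by fastforce
  then obtain i j where "i < j" "(f ^^ i) a = (f ^^ j) a"
    unfolding inj_on_def by (metis linorder_neqE_nat)
  then have "(f ^^ (j - i)) ((f ^^ i) a) = (f ^^ i) a"
    by (metis funpow_add le_add_diff_inverse2 less_imp_le o_apply)
  with \<open>i < j\<close> have orbit: "(f ^^ i) a \<in> orbit f ((f ^^ i) a)"
    unfolding orbit_altdef by (intro CollectI exI[of _ "j - i"]) auto
  define c k where "c = (f ^^ i) a" and "k = funpow_dist1 f c c"
  have period: "(f ^^ k) c = c" and inj: "inj_on (\<lambda>j. (f ^^ j) c) {..<k}"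
    using funpow_dist1_prop[of c f c] inj_on_funpow_dist1[of c f c] orbit
    unfolding c_def k_def by (simp_all add: atLeast0LessThan)
  have "0 < k" by (simp add: k_def)
  have "(f ^^ m) c = (f ^^ m') c \<longleftrightarrow> m mod k = m' mod k" for m m'
    using inj_onD[OF inj, of "m mod k" "m' mod k"] funpow_mod_eq[OF period] \<open>0 < k\<close>
    by (metis lessThan_iff mod_less_divisor)
  then show thesis
    using that[of c k] in_P \<open>0 < k\<close> by (simp add: c_def)
qed

lemma ex_pos_if_sum_pos:
  fixes f :: "'a \<Rightarrow> 'b::{ordered_comm_monoid_add, linorder}"
  assumes "0 < sum f A"
  shows "\<exists>a\<in>A. 0 < f a"
  using sum_nonpos[of A f] assms by (meson not_less)

section \<open>PR boxes\<close>

definition pr_point :: "nat \<Rightarrow> (bool \<Rightarrow> nat \<Rightarrow> real) \<Rightarrow> (bool \<Rightarrow> nat \<Rightarrow> real) \<Rightarrow>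
    bool \<Rightarrow> bool \<Rightarrow> nat \<Rightarrow> real \<times> real" where
  "pr_point k a b x y j = (a x j, b y ((j + of_bool (x \<and> y)) mod k))"

definition pr_data :: "nat \<Rightarrow> (bool \<Rightarrow> nat \<Rightarrow> real) \<Rightarrow> (bool \<Rightarrow> nat \<Rightarrow> real) \<Rightarrow> bool" where
  "pr_data k a b \<longleftrightarrow> k \<ge> 1 \<and> (\<forall>x. inj_on (a x) {..<k}) \<and> (\<forall>y. inj_on (b y) {..<k})"

definition pr_weight :: "nat \<Rightarrow> (bool \<Rightarrow> nat \<Rightarrow> real) \<Rightarrow> (bool \<Rightarrow> nat \<Rightarrow> real) \<Rightarrow>
    bool \<Rightarrow> bool \<Rightarrow> real \<times> real \<Rightarrow> real" where
  "pr_weight k a b x y p = (\<Sum>j<k. if pr_point k a b x y j = p then 1 / real k else 0)"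

definition pr_measure :: "nat \<Rightarrow> (bool \<Rightarrow> nat \<Rightarrow> real) \<Rightarrow> (bool \<Rightarrow> nat \<Rightarrow> real) \<Rightarrow> behaviour" where
  "pr_measure k a b =
     (\<lambda>x y. mixture (\<lambda>_. 1 / real k) (\<lambda>j. return borel (pr_point k a b x y j)) {..<k})"

lemma PR_box_iff: "PR_box \<mu> \<longleftrightarrow> (\<exists>k a b. pr_data k a b \<and> \<mu> = pr_measure k a b)"
  unfolding PR_box_def pr_data_def pr_measure_def pr_point_def by blast

lemma fst_pr_point [simp]: "fst (pr_point k a b x y j) = a x j"
  by (simp add: pr_point_def)

lemma sum_pr_point_snd: "(\<Sum>j<k. g (snd (pr_point k a b x y j))) = (\<Sum>j<k. g (b y j))"
  unfolding pr_point_def using sum_mod_shift[of "\<lambda>j. g (b y j)"] by simp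

lemma inj_on_pr_point: "pr_data k a b \<Longrightarrow> inj_on (pr_point k a b x y) {..<k}"
  unfolding pr_data_def inj_on_def by (metis fst_pr_point)

lemma pr_weight_nonneg: "0 \<le> pr_weight k a b x y p"
  unfolding pr_weight_def by (intro sum_nonneg) auto

lemma pr_weight_eq:
  assumes "pr_data k a b"
  shows "pr_weight k a b x y p = (if p \<in> pr_point k a b x y ` {..<k} then 1 / real k else 0)"
proof (cases "p \<in> pr_point k a b x y ` {..<k}")
  case True
  then obtain j0 where j0: "j0 < k" "p = pr_point k a b x y j0" by blast
  have "pr_point k a b x y j = p \<longleftrightarrow> j = j0" if "j < k" for j
    using inj_on_pr_point[OF assms] that j0 unfolding inj_on_def by blast
  then have "pr_weight k a b x y p = (\<Sum>j<k. if j = j0 then 1 / real k else 0)"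
    unfolding pr_weight_def by (intro sum.cong) auto
  with True j0 show ?thesis by simp
next
  case False
  then show ?thesis unfolding pr_weight_def by (intro trans[OF sum.neutral]) auto
qed

lemma sum_pr_weight:
  assumes "finite S" "\<And>j. j < k \<Longrightarrow> pr_point k a b x y j \<in> S"
  shows "(\<Sum>p\<in>{p\<in>S. P p}. pr_weight k a b x y p) =
    (\<Sum>j<k. if P (pr_point k a b x y j) then 1 / real k else 0)"
  unfolding pr_weight_def using assms
  by (subst sum.swap) (intro sum.cong refl, simp add: sum.delta)

section \<open>Decomposing finitely supported no-signaling weights\<close>

locale ns_weights =
  fixes S :: "(real \<times> real) set" and w :: "bool \<Rightarrow> bool \<Rightarrow> real \<times> real \<Rightarrow> real"
  assumes finite_support: "finite S"
    and nonneg: "\<And>x y p. 0 \<le> w x y p"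
    and vanishes_outside: "\<And>x y p. p \<notin> S \<Longrightarrow> w x y p = 0"
    and marginal_fst:
      "\<And>x a. (\<Sum>p\<in>{p\<in>S. fst p = a}. w x False p) = (\<Sum>p\<in>{p\<in>S. fst p = a}. w x True p)"
    and marginal_snd:
      "\<And>y b. (\<Sum>p\<in>{p\<in>S. snd p = b}. w False y p) = (\<Sum>p\<in>{p\<in>S. snd p = b}. w True y p)"

lemma ns_weights_pr_weight:
  assumes "finite S" "\<And>x y j. j < k \<Longrightarrow> pr_point k a b x y j \<in> S"
  shows "ns_weights S (pr_weight k a b)"
proof
  show "pr_weight k a b x y p = 0" if "p \<notin> S" for x y p
    unfolding pr_weight_def using assms(2) that by (intro sum.neutral) auto
  show "(\<Sum>p\<in>{p\<in>S. fst p = a0}. pr_weight k a b x False p) =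
        (\<Sum>p\<in>{p\<in>S. fst p = a0}. pr_weight k a b x True p)" for x a0
    using assms by (simp add: sum_pr_weight)
  show "(\<Sum>p\<in>{p\<in>S. snd p = b0}. pr_weight k a b False y p) =
        (\<Sum>p\<in>{p\<in>S. snd p = b0}. pr_weight k a b True y p)" for y b0
    using assms sum_pr_point_snd[of "\<lambda>v. if v = b0 then 1 / real k else 0"]
    by (simp add: sum_pr_weight)
qed (use assms pr_weight_nonneg in auto)

lemma ns_weights_diff:
  assumes "ns_weights S w" "ns_weights S v" "\<And>x y p. v x y p \<le> w x y p"
  shows "ns_weights S (\<lambda>x y p. w x y p - v x y p)"
  using assms unfolding ns_weights_def by (simp add: sum_subtractf)

lemma ns_weights_scale:
  assumes "ns_weights S w" "0 \<le> c"
  shows "ns_weights S (\<lambda>x y p. c * w x y p)"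
  using assms unfolding ns_weights_def by (simp add: sum_distrib_left[symmetric])

context ns_weights
begin

lemma in_support: "0 < w x y p \<Longrightarrow> p \<in> S"
  using vanishes_outside by (metis less_irrefl)

lemma marginal_fst_eq: "(\<Sum>p\<in>{p\<in>S. fst p = a}. w x y p) = (\<Sum>p\<in>{p\<in>S. fst p = a}. w x y' p)"
  using marginal_fst[of x a] by (cases y; cases y') simp_all

lemma marginal_snd_eq: "(\<Sum>p\<in>{p\<in>S. snd p = b}. w x y p) = (\<Sum>p\<in>{p\<in>S. snd p = b}. w x' y p)"
  using marginal_snd[of y b] by (cases x; cases x') simp_all

lemma ex_pos_other_y:
  assumes "0 < w x y (a, b)"
  shows "\<exists>b'. 0 < w x y' (a, b')"
proof -
  have "w x y (a, b) \<le> (\<Sum>p\<in>{p\<in>S. fst p = a}. w x y p)"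
    using finite_support nonneg in_support[OF assms] by (intro member_le_sum) auto
  with assms have "0 < (\<Sum>p\<in>{p\<in>S. fst p = a}. w x y' p)"
    using marginal_fst_eq[where a=a and x=x and y=y and y'=y'] by linarith
  then obtain p where "p \<in> {p\<in>S. fst p = a}" "0 < w x y' p"
    by (blast dest: ex_pos_if_sum_pos)
  then show ?thesis by (cases p) auto
qed

lemma ex_pos_other_x:
  assumes "0 < w x y (a, b)"
  shows "\<exists>a'. 0 < w x' y (a', b)"
proof -
  have "w x y (a, b) \<le> (\<Sum>p\<in>{p\<in>S. snd p = b}. w x y p)"
    using finite_support nonneg in_support[OF assms] by (intro member_le_sum) auto
  with assms have "0 < (\<Sum>p\<in>{p\<in>S. snd p = b}. w x' y p)"
    using marginal_snd_eq[where b=b and x=x and y=y and x'=x'] by linarith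
  then obtain p where "p \<in> {p\<in>S. snd p = b}" "0 < w x' y p"
    by (blast dest: ex_pos_if_sum_pos)
  then show ?thesis by (cases p) auto
qed

definition partner_fst :: "bool \<Rightarrow> bool \<Rightarrow> real \<Rightarrow> real" where
  "partner_fst x y b = (SOME a. 0 < w x y (a, b))"

definition partner_snd :: "bool \<Rightarrow> bool \<Rightarrow> real \<Rightarrow> real" where
  "partner_snd x y a = (SOME b. 0 < w x y (a, b))"

lemma pos_partner_fst: "0 < w x y (a, b) \<Longrightarrow> 0 < w x' y (partner_fst x' y b, b)"
  unfolding partner_fst_def by (rule someI_ex[OF ex_pos_other_x])

lemma pos_partner_snd: "0 < w x y (a, b) \<Longrightarrow> 0 < w x y' (a, partner_snd x y' a)"
  unfolding partner_snd_def by (rule someI_ex[OF ex_pos_other_y])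

text \<open>Following positive weights through the settings (0,0), (1,0), (1,1), (0,1) leads from an
  outcome of Alice for input 0 to another one.\<close>

definition chain_step :: "real \<Rightarrow> real" where
  "chain_step a = partner_fst False True (partner_snd True True
                    (partner_fst True False (partner_snd False False a)))"

lemma chain_cycle:
  assumes "0 < w x0 y0 p0"
  obtains c k where "0 < k" "\<And>j. \<exists>b. 0 < w False False ((chain_step ^^ j) c, b)"
    "\<And>m m'. (chain_step ^^ m) c = (chain_step ^^ m') c \<longleftrightarrow> m mod k = m' mod k"
proof -
  define P where "P = {a. \<exists>b. 0 < w False False (a, b)}"
  have "P \<subseteq> fst ` S"
    unfolding P_def using in_support by force
  then have "finite P"
    using finite_support finite_surj by blast
  have closed: "chain_step a \<in> P" if "a \<in> P" for a
  proof -
    from that obtain b where b: "0 < w False False (a, b)"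
      unfolding P_def by blast
    have "0 < w False True (chain_step a, partner_snd True True
                 (partner_fst True False (partner_snd False False a)))"
      unfolding chain_step_def
      by (rule pos_partner_fst[OF pos_partner_snd[OF pos_partner_fst[OF pos_partner_snd[OF b]]]])
    then show ?thesis
      unfolding P_def using ex_pos_other_y by blast
  qed
  moreover obtain a0 where "a0 \<in> P"
  proof -
    obtain b where "0 < w x0 False (fst p0, b)"
      using ex_pos_other_y[of x0 y0 "fst p0" "snd p0"] assms by auto
    then obtain a where "0 < w False False (a, b)"
      using ex_pos_other_x by blast
    then show thesis
      using that unfolding P_def by blast
  qed
  ultimately obtain c k where "c \<in> P" "0 < k"
    and period: "\<And>m m'. (chain_step ^^ m) c = (chain_step ^^ m') c \<longleftrightarrow> m mod k = m' mod k"
    using finite_invariant_set_has_cycle[OF \<open>finite P\<close>] by blast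
  have "(chain_step ^^ j) c \<in> P" for j
    by (induction j) (use \<open>c \<in> P\<close> closed in auto)
  then show thesis
    using that[OF \<open>0 < k\<close> _ period] unfolding P_def by blast
qed

end

lemma pr_data_of_cycle:
  fixes C :: "nat \<Rightarrow> real" and f0 f1 f2 f3 :: "real \<Rightarrow> real"
  assumes "0 < k" and period: "\<And>m m'. C m = C m' \<longleftrightarrow> m mod k = m' mod k"
    and C_Suc: "\<And>j. C (Suc j) = f3 (f2 (f1 (f0 (C j))))"
  shows "pr_data k (\<lambda>x j. if x then f1 (f0 (C j)) else C j)
    (\<lambda>y j. if y then f2 (f1 (f0 (C (j + k - 1)))) else f0 (C j))"
proof -
  have inj_C: "inj_on C {..<k}"
    using period by (intro inj_onI) simp
  have inj_C_Suc: "i = j" if "i < k" "j < k" "C (Suc i) = C (Suc j)" for i j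
  proof -
    have "Suc i mod k = Suc j mod k"
      using period that(3) by blast
    then show ?thesis
      using add_mod_eq_imp_eq[of i 1 k j] that(1,2) by simp
  qed
  have C_pred: "C (Suc (j + k - 1)) = C j" for j
    using period[of "Suc (j + k - 1)" j] \<open>0 < k\<close> by simp
  have "inj_on (\<lambda>j. f2 (f1 (f0 (C (j + k - 1))))) {..<k}"
  proof (rule inj_onI)
    fix i j assume "i \<in> {..<k}" "j \<in> {..<k}" "f2 (f1 (f0 (C (i + k - 1)))) = f2 (f1 (f0 (C (j + k - 1))))"
    then show "i = j"
      using C_Suc[of "i + k - 1"] C_Suc[of "j + k - 1"] C_pred[of i] C_pred[of j] inj_C
      by (simp add: inj_on_def)
  qed
  moreover have "inj_on (\<lambda>j. f1 (f0 (C j))) {..<k}" "inj_on (\<lambda>j. f0 (C j)) {..<k}"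
    using inj_C_Suc C_Suc by (auto intro!: inj_onI)
  ultimately show ?thesis
    unfolding pr_data_def using \<open>0 < k\<close> inj_C by (simp add: all_bool_eq)
qed

lemma (in ns_weights) pr_box_in_support:
  assumes "0 < w x0 y0 p0"
  obtains k a b where "pr_data k a b" "\<And>x y j. j < k \<Longrightarrow> 0 < w x y (pr_point k a b x y j)"
proof -
  obtain c k where "0 < k" and C_pos: "\<And>j. \<exists>b. 0 < w False False ((chain_step ^^ j) c, b)"
    and period: "\<And>m m'. (chain_step ^^ m) c = (chain_step ^^ m') c \<longleftrightarrow> m mod k = m' mod k"
    by (rule chain_cycle[OF assms]) (rule that)
  define C where "C j = (chain_step ^^ j) c" for j
  define b0 where "b0 j = partner_snd False False (C j)" for j
  define a1 where "a1 j = partner_fst True False (b0 j)" for j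
  define b1 where "b1 j = partner_snd True True (a1 j)" for j
  have C_Suc: "C (Suc j) = partner_fst False True (b1 j)" for j
    by (simp add: C_def b1_def a1_def b0_def chain_step_def)
  have e00: "0 < w False False (C j, b0 j)" for j
    using C_pos[of j] pos_partner_snd unfolding C_def b0_def by blast
  have e10: "0 < w True False (a1 j, b0 j)" for j
    unfolding a1_def by (rule pos_partner_fst[OF e00])
  have e11: "0 < w True True (a1 j, b1 j)" for j
    unfolding b1_def by (rule pos_partner_snd[OF e10])
  have e01: "0 < w False True (C (Suc j), b1 j)" for j
    unfolding C_Suc by (rule pos_partner_fst[OF e11])
  have C_cong: "C m = C m'" if "m mod k = m' mod k" for m m'
    using period that unfolding C_def by blast
  define a where "a x j = (if x then a1 j else C j)" for x j
  define b where "b y j = (if y then b1 (j + k - 1) else b0 j)" for y j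
    \<comment> \<open>shifted back by one to undo the shift \<open>j + of_bool (x \<and> y)\<close> in \<open>pr_point\<close>\<close>
  have "pr_data k a b"
    unfolding a_def b_def b1_def a1_def b0_def
    using \<open>0 < k\<close> by (rule pr_data_of_cycle) (use period C_Suc in \<open>simp_all add: C_def b1_def a1_def b0_def\<close>)
  moreover have "0 < w x y (pr_point k a b x y j)" if "j < k" for x y j
  proof (cases x; cases y)
    assume "x" "y"
    have "((j + 1) mod k + k - 1) mod k = j mod k"
    proof -
      have "((j + 1) mod k + k - 1) mod k = ((j + 1) mod k + (k - 1)) mod k"
        using \<open>0 < k\<close> by simp
      also have "\<dots> = (j + 1 + (k - 1)) mod k"
        by (rule mod_add_left_eq)
      finally show ?thesis
        using \<open>0 < k\<close> by simp
    qed
    then have "C ((j + 1) mod k + k - 1) = C j"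
      by (rule C_cong)
    then have "b1 ((j + 1) mod k + k - 1) = b1 j"
      by (simp add: b1_def a1_def b0_def)
    with \<open>x\<close> \<open>y\<close> show ?thesis
      using e11 by (simp add: pr_point_def a_def b_def)
  next
    assume "\<not> x" "y"
    have "C (Suc (j + k - 1)) = C j"
      using C_cong[of "Suc (j + k - 1)" j] \<open>0 < k\<close> by simp
    with \<open>\<not> x\<close> \<open>y\<close> \<open>j < k\<close> show ?thesis
      using e01[of "j + k - 1"] by (simp add: pr_point_def a_def b_def)
  qed (use e00 e10 \<open>j < k\<close> in \<open>simp_all add: pr_point_def a_def b_def\<close>)
  ultimately show thesis
    by (rule that)
qed

definition weight_support ::
    "(bool \<Rightarrow> bool \<Rightarrow> real \<times> real \<Rightarrow> real) \<Rightarrow> (bool \<times> bool \<times> (real \<times> real)) set" where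
  "weight_support w = {(x, y, p). 0 < w x y p}"

lemma (in ns_weights) finite_weight_support: "finite (weight_support w)"
proof (rule finite_subset)
  show "weight_support w \<subseteq> UNIV \<times> UNIV \<times> S"
    unfolding weight_support_def using in_support by auto
qed (simp add: finite_support)

lemma (in ns_weights) peel_pr_box:
  assumes "0 < w x0 y0 p0"
  obtains k a b L where "pr_data k a b" "0 < L" "\<And>x y j. j < k \<Longrightarrow> pr_point k a b x y j \<in> S"
    "ns_weights S (\<lambda>x y p. w x y p - L * pr_weight k a b x y p)"
    "weight_support (\<lambda>x y p. w x y p - L * pr_weight k a b x y p) \<subset> weight_support w"
proof -
  obtain k a b where pr: "pr_data k a b" and pos: "\<And>x y j. j < k \<Longrightarrow> 0 < w x y (pr_point k a b x y j)"
    by (rule pr_box_in_support[OF assms]) (rule that)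
  have "0 < k" using pr by (simp add: pr_data_def)
  have in_S: "\<And>x y j. j < k \<Longrightarrow> pr_point k a b x y j \<in> S"
    using pos in_support by blast
  define E where "E = (\<lambda>(x, y, j). w x y (pr_point k a b x y j)) ` (UNIV \<times> UNIV \<times> {..<k})"
  have "finite E" "E \<noteq> {}"
    using \<open>0 < k\<close> unfolding E_def by auto
  define m where "m = Min E"
  have "0 < m"
    unfolding m_def using \<open>finite E\<close> \<open>E \<noteq> {}\<close> by (subst Min_gr_iff) (auto simp: E_def pos)
  have m_le: "m \<le> w x y (pr_point k a b x y j)" if "j < k" for x y j
    unfolding m_def using \<open>finite E\<close> that
    by (intro Min_le) (auto simp: E_def intro!: image_eqI[where x="(x, y, j)"])
  obtain x1 y1 j1 where "j1 < k" and m_eq: "w x1 y1 (pr_point k a b x1 y1 j1) = m"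
    using Min_in[OF \<open>finite E\<close> \<open>E \<noteq> {}\<close>] unfolding m_def E_def by auto
  define L where "L = real k * m"
    \<comment> \<open>the largest coefficient with \<open>L * pr_weight \<le> w\<close>;
      it annihilates a point of minimal weight\<close>
  have "0 < L"
    unfolding L_def using \<open>0 < k\<close> \<open>0 < m\<close> by simp
  have L_pr: "L * pr_weight k a b x y (pr_point k a b x y j) = m" if "j < k" for x y j
    using that \<open>0 < k\<close> by (simp add: pr_weight_eq[OF pr] L_def)
  have le: "L * pr_weight k a b x y p \<le> w x y p" for x y p
    using m_le L_pr nonneg[of x y p] by (auto simp: pr_weight_eq[OF pr])
  have "ns_weights S (\<lambda>x y p. w x y p - L * pr_weight k a b x y p)"
    using ns_weights_axioms ns_weights_scale[OF ns_weights_pr_weight[OF finite_support in_S]]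
      \<open>0 < L\<close> le by (intro ns_weights_diff) auto
  moreover have "weight_support (\<lambda>x y p. w x y p - L * pr_weight k a b x y p) \<subset> weight_support w"
  proof
    show "weight_support (\<lambda>x y p. w x y p - L * pr_weight k a b x y p) \<subseteq> weight_support w"
      using le_less_trans[OF mult_nonneg_nonneg[OF less_imp_le[OF \<open>0 < L\<close>] pr_weight_nonneg]]
      by (auto simp: weight_support_def)
    have "(x1, y1, pr_point k a b x1 y1 j1) \<in> weight_support w - weight_support (\<lambda>x y p. w x y p - L * pr_weight k a b x y p)"
      unfolding weight_support_def using L_pr[OF \<open>j1 < k\<close>] m_eq \<open>0 < m\<close> by simp
    then show "weight_support (\<lambda>x y p. w x y p - L * pr_weight k a b x y p) \<noteq> weight_support w"
      by blast
  qed
  ultimately show thesis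
    using that pr \<open>0 < L\<close> in_S by blast
qed

lemma ns_weights_decomposition:
  assumes "ns_weights S w"
  shows "\<exists>(n::nat) q K A B. (\<forall>i<n. pr_data (K i) (A i) (B i) \<and> 0 \<le> q i \<and>
      (\<forall>x y j. j < K i \<longrightarrow> pr_point (K i) (A i) (B i) x y j \<in> S)) \<and>
    (\<forall>x y p. w x y p = (\<Sum>i<n. q i * pr_weight (K i) (A i) (B i) x y p))"
  using assms
proof (induction "card (weight_support w)" arbitrary: w rule: less_induct)
  case less
  interpret ns_weights S w by (rule less.prems)
  show ?case
  proof (cases "\<exists>x y p. 0 < w x y p")
    case False
    have w0: "w x y p = 0" for x y p
      using False nonneg[of x y p] by (metis order.order_iff_strict)
    show ?thesis
      by (rule exI[of _ "0::nat"]) (simp add: w0)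
  next
    case True
    then obtain x0 y0 p0 where "0 < w x0 y0 p0" by blast
    then obtain k a b L where "pr_data k a b" "0 < L" "\<And>x y j. j < k \<Longrightarrow> pr_point k a b x y j \<in> S"
      and ns: "ns_weights S (\<lambda>x y p. w x y p - L * pr_weight k a b x y p)"
      and smaller: "weight_support (\<lambda>x y p. w x y p - L * pr_weight k a b x y p) \<subset> weight_support w"
      by (rule peel_pr_box) (rule that)
    from less.hyps[OF psubset_card_mono[OF finite_weight_support smaller] ns]
    obtain n :: nat and q K A B where
      boxes: "\<forall>i<n. pr_data (K i) (A i) (B i) \<and> 0 \<le> q i \<and>
         (\<forall>x y j. j < K i \<longrightarrow> pr_point (K i) (A i) (B i) x y j \<in> S)" and
      rest: "\<forall>x y p. w x y p - L * pr_weight k a b x y p =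
         (\<Sum>i<n. q i * pr_weight (K i) (A i) (B i) x y p)"
      by blast
    define q' K' A' B' where "q' = case_nat L q" and "K' = case_nat k K"
      and "A' = case_nat a A" and "B' = case_nat b B"
    have "\<forall>i<Suc n. pr_data (K' i) (A' i) (B' i) \<and> 0 \<le> q' i \<and>
         (\<forall>x y j. j < K' i \<longrightarrow> pr_point (K' i) (A' i) (B' i) x y j \<in> S)"
      using boxes \<open>pr_data k a b\<close> \<open>0 < L\<close> \<open>\<And>x y j. j < k \<Longrightarrow> pr_point k a b x y j \<in> S\<close>
      by (auto simp: q'_def K'_def A'_def B'_def less_Suc_eq_0_disj)
    moreover have "\<forall>x y p. w x y p = (\<Sum>i<Suc n. q' i * pr_weight (K' i) (A' i) (B' i) x y p)"
      using rest unfolding sum.lessThan_Suc_shift by (simp add: q'_def K'_def A'_def B'_def algebra_simps)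
    ultimately show ?thesis
      by blast
  qed
qed

section \<open>Convex combinations of PR boxes\<close>

lemma measurable_sets_eqD: "sets M = sets N \<Longrightarrow> f \<in> N \<rightarrow>\<^sub>M K \<Longrightarrow> f \<in> M \<rightarrow>\<^sub>M K"
  by (subst measurable_cong_sets[of M N K K]) auto

lemma sets_mixture [simp]: "sets (mixture q M I) = sets (borel :: (real \<times> real) measure)"
  unfolding mixture_def by (subst sets_measure_of) (auto simp: sets.sigma_sets_eq[of borel, simplified])

lemma space_mixture [simp]: "space (mixture q M I) = UNIV"
  unfolding mixture_def by (simp add: space_measure_of_conv)

lemma emeasure_mixture:
  assumes "finite I" "\<And>i. i \<in> I \<Longrightarrow> sets (M i) = sets borel" "A \<in> sets borel"
  shows "emeasure (mixture q M I) A = (\<Sum>i\<in>I. ennreal (q i) * emeasure (M i) A)"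
  unfolding mixture_def
proof (rule emeasure_measure_of_sigma)
  show "sigma_algebra UNIV (sets (borel :: (real \<times> real) measure))"
    using sets.sigma_algebra_axioms[of borel] by simp
  show "positive (sets borel) (\<lambda>A. \<Sum>i\<in>I. ennreal (q i) * emeasure (M i) A)"
    unfolding positive_def by simp
  show "countably_additive (sets borel) (\<lambda>A. \<Sum>i\<in>I. ennreal (q i) * emeasure (M i) A)"
    unfolding countably_additive_def
  proof (intro allI impI)
    fix F :: "nat \<Rightarrow> (real \<times> real) set"
    assume F: "range F \<subseteq> sets borel" "disjoint_family F"
    have "(\<Sum>n. \<Sum>i\<in>I. ennreal (q i) * emeasure (M i) (F n)) =
        (\<Sum>i\<in>I. ennreal (q i) * (\<Sum>n. emeasure (M i) (F n)))"
      by (subst suminf_sum) (auto intro: summableI simp: ennreal_suminf_cmult)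
    also have "\<dots> = (\<Sum>i\<in>I. ennreal (q i) * emeasure (M i) (\<Union> (range F)))"
      using F assms(2) by (intro sum.cong refl) (simp add: suminf_emeasure)
    finally show "(\<Sum>n. \<Sum>i\<in>I. ennreal (q i) * emeasure (M i) (F n)) =
        (\<Sum>i\<in>I. ennreal (q i) * emeasure (M i) (\<Union> (range F)))" .
  qed
qed (use assms(3) in auto)

lemma prob_space_mixture:
  assumes "finite I" "\<And>i. i \<in> I \<Longrightarrow> 0 \<le> q i" "sum q I = 1"
    and "\<And>i. i \<in> I \<Longrightarrow> prob_space (M i) \<and> sets (M i) = sets borel"
  shows "prob_space (mixture q M I)"
proof (rule prob_spaceI)
  have "emeasure (M i) UNIV = 1" if "i \<in> I" for i
    using assms(4)[OF that] by (metis prob_space.emeasure_space_1 sets_eq_imp_space_eq space_borel)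
  then have "emeasure (mixture q M I) UNIV = (\<Sum>i\<in>I. ennreal (q i))"
    using assms(1,4) by (simp add: emeasure_mixture)
  also have "\<dots> = 1"
    using assms by (simp add: sum_ennreal)
  finally show "emeasure (mixture q M I) (space (mixture q M I)) = 1"
    by simp
qed

lemma Times_in_borel:
  "A \<in> sets (borel :: 'a::second_countable_topology measure) \<Longrightarrow>
   B \<in> sets (borel :: 'b::second_countable_topology measure) \<Longrightarrow> A \<times> B \<in> sets borel"
  by (metis borel_prod pair_measureI)

lemma no_signaling_mixture:
  assumes "finite I" "\<And>i. i \<in> I \<Longrightarrow> 0 \<le> q i" "sum q I = 1"
    and "\<And>i. i \<in> I \<Longrightarrow> no_signaling (\<mu>s i)"
  shows "no_signaling (\<lambda>x y. mixture q (\<lambda>i. \<mu>s i x y) I)"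
proof -
  have beh: "prob_space (\<mu>s i x y) \<and> sets (\<mu>s i x y) = sets borel" if "i \<in> I" for i x y
    using assms(4)[OF that] by (simp add: no_signaling_def is_behaviour_def)
  have emeasure_eq: "emeasure (mixture q (\<lambda>i. \<mu>s i x y) I) C = (\<Sum>i\<in>I. ennreal (q i) * emeasure (\<mu>s i x y) C)"
    if "C \<in> sets borel" for x y C
    using assms(1) beh that by (intro emeasure_mixture) auto
  show ?thesis
    unfolding no_signaling_def is_behaviour_def
    using assms beh prob_space_mixture[of I q]
    by (auto simp: emeasure_eq Times_in_borel no_signaling_def intro!: sum.cong)
qed

lemma emeasure_pr_measure:
  assumes "C \<in> sets borel"
  shows "emeasure (pr_measure k a b x y) C = (\<Sum>j<k. ennreal (1 / real k) * indicator C (pr_point k a b x y j))"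
  using assms unfolding pr_measure_def by (simp add: emeasure_mixture)

lemma PR_box_no_signaling:
  assumes "PR_box \<mu>"
  shows "no_signaling \<mu>"
proof -
  obtain k a b where "pr_data k a b" and \<mu>: "\<mu> = pr_measure k a b"
    using assms by (auto simp: PR_box_iff)
  then have "0 < k" by (simp add: pr_data_def)
  have "prob_space (\<mu> x y)" for x y
    unfolding \<mu> pr_measure_def using \<open>0 < k\<close>
    by (intro prob_space_mixture) (auto simp: prob_space_return)
  moreover have "sets (\<mu> x y) = sets borel" for x y
    by (simp add: \<mu> pr_measure_def)
  moreover have "emeasure (\<mu> x y) (A \<times> UNIV) = (\<Sum>j<k. ennreal (1 / real k) * indicator A (a x j))"
    if "A \<in> sets borel" for x y A
    using that by (simp add: \<mu> emeasure_pr_measure Times_in_borel pr_point_def)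
  moreover have "emeasure (\<mu> x y) (UNIV \<times> B) = (\<Sum>j<k. ennreal (1 / real k) * indicator B (b y j))"
    if "B \<in> sets borel" for x y B
    using that sum_pr_point_snd[of "\<lambda>v. ennreal (1 / real k) * indicator B v" k a b x y]
    by (simp add: \<mu> emeasure_pr_measure Times_in_borel mem_Times_iff)
  ultimately show ?thesis
    by (simp add: no_signaling_def is_behaviour_def)
qed

lemma Conv_PR_no_signaling:
  assumes "\<nu> \<in> Conv_PR"
  shows "no_signaling \<nu>"
proof -
  obtain n :: nat and q \<mu>s where "\<forall>i<n. PR_box (\<mu>s i) \<and> 0 \<le> q i" "sum q {..<n} = 1"
    and \<nu>: "\<nu> = (\<lambda>x y. mixture q (\<lambda>i. \<mu>s i x y) {..<n})"
    using assms unfolding Conv_PR_def by blast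
  then show ?thesis
    unfolding \<nu> by (intro no_signaling_mixture) (auto intro: PR_box_no_signaling)
qed

lemma measure_eq_sum_singletons_AE:
  assumes "finite_measure M" "sets M = sets (borel :: 'a::t1_space measure)"
    and "finite S" "AE p in M. p \<in> S" "C \<in> sets borel"
  shows "measure M C = (\<Sum>p\<in>{p\<in>S. p \<in> C}. measure M {p})"
proof -
  have finite_sets: "T \<in> sets M" if "finite T" for T
    using assms(2) that by (simp add: finite_imp_closed)
  have "measure M C = measure M {p\<in>S. p \<in> C}"
    using assms(2,4,5) finite_sets[of "{p\<in>S. p \<in> C}"] assms(3)
    by (intro finite_measure.finite_measure_eq_AE[OF assms(1)]) auto
  also have "\<dots> = (\<Sum>p\<in>{p\<in>S. p \<in> C}. measure M {p})"
    using assms(3) finite_sets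
    by (intro finite_measure.finite_measure_eq_sum_singleton[OF assms(1)]) auto
  finally show ?thesis .
qed

lemma ns_weights_point_masses:
  assumes "no_signaling \<nu>" "finite S" "\<And>x y. AE p in \<nu> x y. p \<in> S"
  shows "ns_weights S (\<lambda>x y p. measure (\<nu> x y) {p})"
proof -
  have "prob_space (\<nu> x y)" and sets: "sets (\<nu> x y) = sets borel" for x y
    using assms(1) by (auto simp: no_signaling_def is_behaviour_def)
  then have sum_eq: "measure (\<nu> x y) C = (\<Sum>p\<in>{p\<in>S. p \<in> C}. measure (\<nu> x y) {p})"
    if "C \<in> sets borel" for x y C
    using assms(2,3) that by (intro measure_eq_sum_singletons_AE) (auto intro: prob_space.finite_measure)
  have borel: "{a} \<times> UNIV \<in> sets borel" "UNIV \<times> {a} \<in> sets borel" for a :: real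
    by (simp_all add: borel_closed closed_Times)
  have slices: "{p\<in>S. p \<in> {a} \<times> UNIV} = {p\<in>S. fst p = a}" "{p\<in>S. p \<in> UNIV \<times> {a}} = {p\<in>S. snd p = a}"
    for a :: real
    by auto
  have marginals:
    "(\<Sum>p\<in>{p\<in>S. fst p = a}. measure (\<nu> x y) {p}) = measure (\<nu> x y) ({a} \<times> UNIV)"
    "(\<Sum>p\<in>{p\<in>S. snd p = a}. measure (\<nu> x y) {p}) = measure (\<nu> x y) (UNIV \<times> {a})" for x y a
    using sum_eq[OF borel(1), of x y a] sum_eq[OF borel(2), of x y a] by (simp_all only: slices)
  show ?thesis
  proof
    show "measure (\<nu> x y) {p} = 0" if "p \<notin> S" for x y p
    proof -
      have "measure (\<nu> x y) {p} = (\<Sum>q\<in>{q\<in>S. q \<in> {p}}. measure (\<nu> x y) {q})"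
        by (rule sum_eq) simp
      also have "{q\<in>S. q \<in> {p}} = {}"
        using that by auto
      finally show ?thesis
        by simp
    qed
  qed (use assms marginals in \<open>simp_all add: no_signaling_def measure_def\<close>)
qed

lemma emeasure_pr_measure_eq_sum:
  assumes "C \<in> sets borel"
  shows "emeasure (pr_measure k a b x y) C =
    ennreal (\<Sum>j<k. if pr_point k a b x y j \<in> C then 1 / real k else 0)"
proof -
  have "emeasure (pr_measure k a b x y) C =
      (\<Sum>j<k. ennreal (if pr_point k a b x y j \<in> C then 1 / real k else 0))"
    unfolding emeasure_pr_measure[OF assms] by (intro sum.cong) (auto simp: indicator_def)
  also have "\<dots> = ennreal (\<Sum>j<k. if pr_point k a b x y j \<in> C then 1 / real k else 0)"
    by (rule sum_ennreal) simp
  finally show ?thesis .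
qed

lemma emeasure_mixture_pr_measure:
  fixes n :: nat
  assumes "finite S" "\<And>i. i < n \<Longrightarrow> 0 \<le> q i"
    and "\<And>i x y j. i < n \<Longrightarrow> j < K i \<Longrightarrow> pr_point (K i) (A i) (B i) x y j \<in> S"
    and "C \<in> sets borel"
  shows "emeasure (mixture q (\<lambda>i. pr_measure (K i) (A i) (B i) x y) {..<n}) C =
    ennreal (\<Sum>i<n. \<Sum>p\<in>{p\<in>S. p \<in> C}. q i * pr_weight (K i) (A i) (B i) x y p)"
proof -
  have "emeasure (mixture q (\<lambda>i. pr_measure (K i) (A i) (B i) x y) {..<n}) C =
      (\<Sum>i<n. ennreal (q i) * emeasure (pr_measure (K i) (A i) (B i) x y) C)"
    using assms(4) by (intro emeasure_mixture) (auto simp: pr_measure_def)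
  also have "\<dots> = (\<Sum>i<n. ennreal (q i * (\<Sum>p\<in>{p\<in>S. p \<in> C}. pr_weight (K i) (A i) (B i) x y p)))"
    using assms by (intro sum.cong)
      (simp_all add: emeasure_pr_measure_eq_sum sum_pr_weight ennreal_mult sum_nonneg pr_weight_nonneg)
  also have "\<dots> = ennreal (\<Sum>i<n. \<Sum>p\<in>{p\<in>S. p \<in> C}. q i * pr_weight (K i) (A i) (B i) x y p)"
    using assms(2) by (subst sum_ennreal) (simp_all add: sum_distrib_left sum_nonneg pr_weight_nonneg)
  finally show ?thesis .
qed

lemma Conv_PR_of_finite_support:
  assumes "no_signaling \<nu>" "finite S" "\<And>x y. AE p in \<nu> x y. p \<in> S"
  shows "\<nu> \<in> Conv_PR"
proof -
  have prob: "prob_space (\<nu> x y)" and sets: "sets (\<nu> x y) = sets borel" for x y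
    using assms(1) by (auto simp: no_signaling_def is_behaviour_def)
  define w where "w x y p = measure (\<nu> x y) {p}" for x y p
  have sum_w: "measure (\<nu> x y) C = (\<Sum>p\<in>{p\<in>S. p \<in> C}. w x y p)" if "C \<in> sets borel" for x y C
    unfolding w_def using prob sets assms(2,3) that
    by (intro measure_eq_sum_singletons_AE) (auto intro: prob_space.finite_measure)
  obtain n :: nat and q K A B where boxes: "\<forall>i<n. pr_data (K i) (A i) (B i) \<and> 0 \<le> q i \<and>
      (\<forall>x y j. j < K i \<longrightarrow> pr_point (K i) (A i) (B i) x y j \<in> S)"
    and decomp: "\<forall>x y p. w x y p = (\<Sum>i<n. q i * pr_weight (K i) (A i) (B i) x y p)"
    using ns_weights_decomposition[OF ns_weights_point_masses[OF assms]] unfolding w_def by blast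
  define \<mu>s where "\<mu>s i = pr_measure (K i) (A i) (B i)" for i
  have mixture_eq: "emeasure (mixture q (\<lambda>i. \<mu>s i x y) {..<n}) C = ennreal (measure (\<nu> x y) C)"
    if "C \<in> sets borel" for x y C
    unfolding \<mu>s_def sum_w[OF that] decomp[rule_format] using assms(2) boxes that
    by (subst sum.swap) (intro emeasure_mixture_pr_measure, auto)
  have "\<nu> x y = mixture q (\<lambda>i. \<mu>s i x y) {..<n}" for x y
    using prob_space.finite_measure[OF prob]
    by (intro measure_eqI) (auto simp: sets mixture_eq finite_measure.emeasure_eq_measure)
  moreover have PR: "PR_box (\<mu>s i)" if "i < n" for i
    using boxes that by (auto simp: PR_box_iff \<mu>s_def)
  moreover have "sum q {..<n} = 1"
  proof -
    have "emeasure (\<mu>s i False False) UNIV = 1" if "i < n" for i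
      using PR_box_no_signaling[OF PR[OF that]]
      by (metis is_behaviour_def no_signaling_def prob_space.emeasure_space_1 sets_eq_imp_space_eq space_borel)
    then have "ennreal (sum q {..<n}) = emeasure (mixture q (\<lambda>i. \<mu>s i False False) {..<n}) UNIV"
      using boxes by (simp add: emeasure_mixture \<mu>s_def pr_measure_def) (subst sum_ennreal; simp)
    also have "\<dots> = 1"
      using prob_space.prob_space[OF prob] sets by (simp add: mixture_eq sets_eq_imp_space_eq)
    finally show ?thesis
      using boxes by (simp add: sum_nonneg)
  qed
  ultimately show ?thesis
    unfolding Conv_PR_def using boxes by blast
qed

section \<open>Weak limits of no-signaling behaviours\<close>

lemma emeasure_distr_fst:
  assumes "sets M = sets (borel :: (real \<times> real) measure)" "A \<in> sets (borel :: real measure)"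
  shows "emeasure (distr M borel fst) A = emeasure M (A \<times> UNIV)"
proof -
  have "fst \<in> borel_measurable M"
    using assms(1) by (rule measurable_sets_eqD) (intro borel_measurable_continuous_onI continuous_intros)
  with assms show ?thesis
    by (simp add: emeasure_distr vimage_fst sets_eq_imp_space_eq)
qed

lemma emeasure_distr_snd:
  assumes "sets M = sets (borel :: (real \<times> real) measure)" "B \<in> sets (borel :: real measure)"
  shows "emeasure (distr M borel snd) B = emeasure M (UNIV \<times> B)"
proof -
  have "snd \<in> borel_measurable M"
    using assms(1) by (rule measurable_sets_eqD) (intro borel_measurable_continuous_onI continuous_intros)
  with assms show ?thesis
    by (simp add: emeasure_distr vimage_snd sets_eq_imp_space_eq)
qed

lemma no_signaling_iff_distr:
  assumes "is_behaviour \<mu>"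
  shows "no_signaling \<mu> \<longleftrightarrow>
    (\<forall>x. distr (\<mu> x False) borel fst = distr (\<mu> x True) borel fst) \<and>
    (\<forall>y. distr (\<mu> False y) borel snd = distr (\<mu> True y) borel snd)"
proof -
  have sets: "sets (\<mu> x y) = sets borel" for x y
    using assms by (simp add: is_behaviour_def)
  have "distr (\<mu> x False) borel fst = distr (\<mu> x True) borel fst \<longleftrightarrow>
      (\<forall>A\<in>sets borel. emeasure (\<mu> x False) (A \<times> UNIV) = emeasure (\<mu> x True) (A \<times> UNIV))" for x
    by (metis emeasure_distr_fst[OF sets] measure_eqI sets_distr)
  moreover have "distr (\<mu> False y) borel snd = distr (\<mu> True y) borel snd \<longleftrightarrow>
      (\<forall>B\<in>sets borel. emeasure (\<mu> False y) (UNIV \<times> B) = emeasure (\<mu> True y) (UNIV \<times> B))" for y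
    by (metis emeasure_distr_snd[OF sets] measure_eqI sets_distr)
  ultimately show ?thesis
    using assms by (auto simp: no_signaling_def)
qed

lemma char_eq_integral_cos_sin:
  assumes "real_distribution M"
  shows "char M t = complex_of_real (\<integral>x. cos (t * x) \<partial>M) + \<i> * complex_of_real (\<integral>x. sin (t * x) \<partial>M)"
proof -
  interpret real_distribution M by fact
  have "iexp (t * x) = complex_of_real (cos (t * x)) + \<i> * complex_of_real (sin (t * x))" for x
    unfolding cis_conv_exp[symmetric] by (simp add: complex_eq_iff)
  moreover have "integrable M (\<lambda>x. complex_of_real (cos (t * x)))"
    "integrable M (\<lambda>x. \<i> * complex_of_real (sin (t * x)))"
    by (intro integrable_const_bound[where B=1]; simp add: norm_mult)+
  ultimately show ?thesis
    unfolding char_def by simp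
qed

lemma real_distribution_eqI_integral:
  fixes M N :: "real measure"
  assumes "real_distribution M" "real_distribution N"
    and "\<And>g :: real \<Rightarrow> real. continuous_on UNIV g \<Longrightarrow> bounded (range g) \<Longrightarrow>
      integral\<^sup>L M g = integral\<^sup>L N g"
  shows "M = N"
proof (rule Levy_uniqueness[OF assms(1,2)])
  have "bounded (range (\<lambda>x. cos (t * x)))" "bounded (range (\<lambda>x. sin (t * x)))" for t :: real
    unfolding bounded_iff by (auto intro!: exI[of _ 1])
  moreover have "continuous_on UNIV (\<lambda>x. cos (t * x))" "continuous_on UNIV (\<lambda>x. sin (t * x))"
    for t :: real
    by (intro continuous_intros)+
  ultimately show "char M = char N"
    using assms(3) by (auto simp: char_eq_integral_cos_sin[OF assms(1)] char_eq_integral_cos_sin[OF assms(2)])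
qed

lemma distr_eq_of_weak_limits:
  fixes \<pi> :: "real \<times> real \<Rightarrow> real"
  assumes "continuous_on UNIV \<pi>"
    and "prob_space M1" "sets M1 = sets borel" "prob_space M2" "sets M2 = sets borel"
    and "\<And>n. sets (N1 n) = sets borel" "\<And>n. sets (N2 n) = sets borel"
    and "\<And>n. distr (N1 n) borel \<pi> = distr (N2 n) borel \<pi>"
    and "weak_conv_plane N1 M1" "weak_conv_plane N2 M2"
  shows "distr M1 borel \<pi> = distr M2 borel \<pi>"
proof (rule real_distribution_eqI_integral)
  have \<pi>: "\<pi> \<in> borel_measurable borel"
    using assms(1) by (rule borel_measurable_continuous_onI)
  show "real_distribution (distr M1 borel \<pi>)" "real_distribution (distr M2 borel \<pi>)"
    using assms(2-5) measurable_sets_eqD[OF _ \<pi>]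
    by (auto intro!: real_distribution.intro prob_space.prob_space_distr simp: real_distribution_axioms_def)
  fix g :: "real \<Rightarrow> real"
  assume g: "continuous_on UNIV g" "bounded (range g)"
  have integral_distr_\<pi>: "integral\<^sup>L (distr M borel \<pi>) g = (\<integral>p. g (\<pi> p) \<partial>M)" if "sets M = sets borel" for M
    using that g(1) by (intro integral_distr measurable_sets_eqD[OF _ \<pi>] borel_measurable_continuous_onI)
  have "continuous_on UNIV (\<lambda>p. g (\<pi> p))"
    using continuous_on_compose[OF assms(1) continuous_on_subset[OF g(1)]] by (simp add: o_def)
  moreover have "bounded (range (\<lambda>p. g (\<pi> p)))"
    by (rule bounded_subset[OF g(2)]) auto
  ultimately have "(\<lambda>n. \<integral>p. g (\<pi> p) \<partial>N1 n) \<longlonglongrightarrow> (\<integral>p. g (\<pi> p) \<partial>M1)"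
    "(\<lambda>n. \<integral>p. g (\<pi> p) \<partial>N2 n) \<longlonglongrightarrow> (\<integral>p. g (\<pi> p) \<partial>M2)"
    using assms(9,10) unfolding weak_conv_plane_def by blast+
  moreover have "(\<integral>p. g (\<pi> p) \<partial>N1 n) = (\<integral>p. g (\<pi> p) \<partial>N2 n)" for n
    using integral_distr_\<pi>[OF assms(6)] integral_distr_\<pi>[OF assms(7)] assms(8) by metis
  ultimately show "integral\<^sup>L (distr M1 borel \<pi>) g = integral\<^sup>L (distr M2 borel \<pi>) g"
    using LIMSEQ_unique integral_distr_\<pi>[OF assms(3)] integral_distr_\<pi>[OF assms(5)] by simp
qed

lemma no_signaling_weak_limit:
  assumes "is_behaviour \<mu>" "\<And>n. no_signaling (s n)" "\<And>x y. weak_conv_plane (\<lambda>n. s n x y) (\<mu> x y)"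
  shows "no_signaling \<mu>"
proof -
  have \<mu>: "prob_space (\<mu> x y)" "sets (\<mu> x y) = sets borel" for x y
    using assms(1) by (auto simp: is_behaviour_def)
  have s: "is_behaviour (s n)" "sets (s n x y) = sets borel" for n x y
    using assms(2) by (auto simp: no_signaling_def is_behaviour_def)
  have fst: "continuous_on UNIV (fst :: real \<times> real \<Rightarrow> real)"
    and snd: "continuous_on UNIV (snd :: real \<times> real \<Rightarrow> real)"
    by (intro continuous_intros)+
  have "distr (\<mu> x False) borel fst = distr (\<mu> x True) borel fst" for x
    by (rule distr_eq_of_weak_limits[OF fst \<mu> \<mu> s(2) s(2) _ assms(3) assms(3)])
      (use assms(2) no_signaling_iff_distr[OF s(1)] in blast)
  moreover have "distr (\<mu> False y) borel snd = distr (\<mu> True y) borel snd" for y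
    by (rule distr_eq_of_weak_limits[OF snd \<mu> \<mu> s(2) s(2) _ assms(3) assms(3)])
      (use assms(2) no_signaling_iff_distr[OF s(1)] in blast)
  ultimately show ?thesis
    using no_signaling_iff_distr[OF assms(1)] by blast
qed

section \<open>Approximation by quantization\<close>

lemma borel_measurable_map_prod:
  fixes f :: "'a::second_countable_topology \<Rightarrow> 'c::second_countable_topology"
    and g :: "'b::second_countable_topology \<Rightarrow> 'd::second_countable_topology"
  assumes "f \<in> borel_measurable borel" "g \<in> borel_measurable borel"
  shows "map_prod f g \<in> borel_measurable borel"
proof -
  have "(\<lambda>p. (f (fst p), g (snd p))) \<in> borel_measurable (borel \<Otimes>\<^sub>M borel)"
    using assms by measurable
  then show ?thesis
    by (simp add: borel_prod map_prod_def case_prod_beta')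
qed

lemma no_signaling_distr_map_prod:
  assumes "no_signaling \<mu>" "h \<in> borel_measurable borel"
  shows "no_signaling (\<lambda>x y. distr (\<mu> x y) borel (map_prod h h))"
proof -
  have \<mu>: "is_behaviour \<mu>" "prob_space (\<mu> x y)" "sets (\<mu> x y) = sets borel" for x y
    using assms(1) by (auto simp: no_signaling_def is_behaviour_def)
  have hh: "map_prod h h \<in> borel_measurable (borel :: (real \<times> real) measure)"
    using assms(2) assms(2) by (rule borel_measurable_map_prod)
  then have hh_\<mu>: "map_prod h h \<in> borel_measurable (\<mu> x y)" for x y
    using \<mu>(3) by (rule measurable_sets_eqD[rotated])
  have fst_snd: "fst \<in> borel_measurable (borel :: (real \<times> real) measure)"
    "snd \<in> borel_measurable (borel :: (real \<times> real) measure)"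
    by (intro borel_measurable_continuous_onI continuous_intros)+
  have "is_behaviour (\<lambda>x y. distr (\<mu> x y) borel (map_prod h h))"
    using \<mu> hh_\<mu> by (simp add: is_behaviour_def prob_space.prob_space_distr)
  moreover have "distr (distr (\<mu> x y) borel (map_prod h h)) borel fst = distr (distr (\<mu> x y) borel fst) borel h"
    "distr (distr (\<mu> x y) borel (map_prod h h)) borel snd = distr (distr (\<mu> x y) borel snd) borel h"
    for x y
    using hh_\<mu> fst_snd assms(2) measurable_sets_eqD[OF \<mu>(3) fst_snd(1)] measurable_sets_eqD[OF \<mu>(3) fst_snd(2)]
    by (simp_all add: distr_distr o_def)
  ultimately show ?thesis
    using assms(1) by (simp add: no_signaling_iff_distr \<mu>(1))
qed

lemma weak_conv_distr_pointwise_limit: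
  assumes "prob_space M" "sets M = sets (borel :: (real \<times> real) measure)"
    and "\<And>n. h n \<in> borel_measurable borel" "\<And>p. (\<lambda>n. h n p) \<longlonglongrightarrow> p"
  shows "weak_conv_plane (\<lambda>n. distr M borel (h n)) M"
  unfolding weak_conv_plane_def
proof (intro allI impI)
  interpret prob_space M by fact
  fix f :: "real \<times> real \<Rightarrow> real"
  assume f: "continuous_on UNIV f \<and> bounded (range f)"
  then obtain B where B: "\<And>p. \<bar>f p\<bar> \<le> B"
    unfolding bounded_iff by auto
  have f_meas: "f \<in> borel_measurable borel"
    using f by (intro borel_measurable_continuous_onI) simp
  have h_meas: "h n \<in> borel_measurable M" for n
    using assms(2,3) by (rule measurable_sets_eqD)
  have "(\<lambda>n. \<integral>p. f (h n p) \<partial>M) \<longlonglongrightarrow> (\<integral>p. f p \<partial>M)"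
  proof (rule integral_dominated_convergence[where w="\<lambda>_. B"])
    show "(\<lambda>p. f (h n p)) \<in> borel_measurable M" for n
      using measurable_comp[OF h_meas f_meas] by (simp add: o_def)
    have "isCont f p" for p
      using f continuous_on_eq_continuous_at[OF open_UNIV, of f] by blast
    then show "AE p in M. (\<lambda>n. f (h n p)) \<longlonglongrightarrow> f p"
      using isCont_tendsto_compose assms(4) by blast
  qed (use measurable_sets_eqD[OF assms(2) f_meas] B in auto)
  moreover have "integral\<^sup>L (distr M borel (h n)) f = (\<integral>p. f (h n p) \<partial>M)" for n
    by (rule integral_distr[OF h_meas f_meas])
  ultimately show "(\<lambda>n. integral\<^sup>L (distr M borel (h n)) f) \<longlonglongrightarrow> integral\<^sup>L M f"
    by simp
qed

definition grid_round :: "nat \<Rightarrow> real \<Rightarrow> real" where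
  "grid_round n t = real_of_int \<lfloor>max (- real n) (min (real n) t) * real (Suc n)\<rfloor> / real (Suc n)"

lemma borel_measurable_grid_round: "grid_round n \<in> borel_measurable borel"
  unfolding grid_round_def by measurable

lemma finite_range_grid_round: "finite (range (grid_round n))"
proof (rule finite_subset)
  let ?c = "real n * real (Suc n)"
  show "range (grid_round n) \<subseteq> (\<lambda>i. real_of_int i / real (Suc n)) ` {\<lfloor>- ?c\<rfloor>..\<lfloor>?c\<rfloor>}"
  proof
    fix v assume "v \<in> range (grid_round n)"
    then obtain t where v: "v = grid_round n t" by auto
    define c where "c = max (- real n) (min (real n) t)"
    have "- ?c \<le> c * real (Suc n)" "c * real (Suc n) \<le> ?c"
      using mult_right_mono[of "- real n" c "real (Suc n)"] mult_right_mono[of c "real n" "real (Suc n)"]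
      by (auto simp: c_def)
    then have "\<lfloor>c * real (Suc n)\<rfloor> \<in> {\<lfloor>- ?c\<rfloor>..\<lfloor>?c\<rfloor>}"
      using floor_mono by auto
    then show "v \<in> (\<lambda>i. real_of_int i / real (Suc n)) ` {\<lfloor>- ?c\<rfloor>..\<lfloor>?c\<rfloor>}"
      unfolding v grid_round_def c_def[symmetric] by (rule imageI)
  qed
qed simp

lemma grid_round_tendsto: "(\<lambda>n. grid_round n t) \<longlonglongrightarrow> t"
proof (rule tendsto_sandwich[of "\<lambda>n. t - 1 / real (Suc n)" _ _ "\<lambda>n. t"])
  obtain N where "\<bar>t\<bar> \<le> real N"
    using real_arch_simple by blast
  then have "eventually (\<lambda>n. \<bar>t\<bar> \<le> real n) sequentially"
    unfolding eventually_sequentially by (meson of_nat_le_iff order_trans)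
  then have eq: "eventually (\<lambda>n. grid_round n t = real_of_int \<lfloor>t * real (Suc n)\<rfloor> / real (Suc n)) sequentially"
    by eventually_elim (simp add: grid_round_def)
  show "eventually (\<lambda>n. t - 1 / real (Suc n) \<le> grid_round n t) sequentially"
    using eq
  proof eventually_elim
    case (elim n)
    have "t * real (Suc n) - 1 \<le> real_of_int \<lfloor>t * real (Suc n)\<rfloor>"
      by linarith
    then show ?case
      using elim by (simp add: field_simps)
  qed
  show "eventually (\<lambda>n. grid_round n t \<le> t) sequentially"
    using eq
  proof eventually_elim
    case (elim n)
    have "real_of_int \<lfloor>t * real (Suc n)\<rfloor> \<le> t * real (Suc n)"
      by linarith
    then show ?case
      unfolding elim by (simp add: pos_divide_le_eq del: of_nat_Suc)
  qed
  show "(\<lambda>n. t - 1 / real (Suc n)) \<longlonglongrightarrow> t"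
    using tendsto_diff[OF tendsto_const[of t] LIMSEQ_inverse_real_of_nat] by (simp add: inverse_eq_divide)
qed simp

lemma Conv_PR_distr_grid_round:
  assumes "no_signaling \<mu>"
  shows "(\<lambda>x y. distr (\<mu> x y) borel (map_prod (grid_round n) (grid_round n))) \<in> Conv_PR"
proof (rule Conv_PR_of_finite_support)
  let ?S = "range (grid_round n) \<times> range (grid_round n)"
  have meas: "map_prod (grid_round n) (grid_round n) \<in> borel_measurable (\<mu> x y)" for x y
    using assms by (intro measurable_sets_eqD[OF _ borel_measurable_map_prod] borel_measurable_grid_round)
      (simp add: no_signaling_def is_behaviour_def)
  show "no_signaling (\<lambda>x y. distr (\<mu> x y) borel (map_prod (grid_round n) (grid_round n)))"
    using assms by (intro no_signaling_distr_map_prod borel_measurable_grid_round)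
  show "finite ?S"
    using finite_range_grid_round by simp
  then have "{p \<in> space borel. p \<in> ?S} \<in> sets borel"
    by (simp add: borel_closed finite_imp_closed)
  moreover have "AE p in \<mu> x y. map_prod (grid_round n) (grid_round n) p \<in> ?S" for x y
    by (rule AE_I2) (simp add: map_prod_def split_beta)
  ultimately show "AE p in distr (\<mu> x y) borel (map_prod (grid_round n) (grid_round n)). p \<in> ?S" for x y
    by (simp add: AE_distr_iff[OF meas])
qed

theorem theorem1:
  fixes \<mu> :: behaviour
  assumes "is_behaviour \<mu>"
  shows "no_signaling \<mu> \<longleftrightarrow>
    (\<exists>s :: nat \<Rightarrow> behaviour. (\<forall>n. s n \<in> Conv_PR) \<and> (\<forall>x y. weak_conv_plane (\<lambda>n. s n x y) (\<mu> x y)))"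
proof
  assume "no_signaling \<mu>"
  define s where "s n x y = distr (\<mu> x y) borel (map_prod (grid_round n) (grid_round n))" for n x y
  have "s n \<in> Conv_PR" for n
    unfolding s_def using \<open>no_signaling \<mu>\<close> by (rule Conv_PR_distr_grid_round)
  moreover have "weak_conv_plane (\<lambda>n. s n x y) (\<mu> x y)" for x y
    unfolding s_def
  proof (rule weak_conv_distr_pointwise_limit)
    show "prob_space (\<mu> x y)" "sets (\<mu> x y) = sets borel"
      using assms by (simp_all add: is_behaviour_def)
    show "map_prod (grid_round n) (grid_round n) \<in> borel_measurable borel" for n
      by (intro borel_measurable_map_prod borel_measurable_grid_round)
    show "(\<lambda>n. map_prod (grid_round n) (grid_round n) p) \<longlonglongrightarrow> p" for p
      by (cases p) (simp add: tendsto_Pair grid_round_tendsto)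
  qed
  ultimately show "\<exists>s. (\<forall>n. s n \<in> Conv_PR) \<and> (\<forall>x y. weak_conv_plane (\<lambda>n. s n x y) (\<mu> x y))"
    by blast
next
  assume "\<exists>s. (\<forall>n. s n \<in> Conv_PR) \<and> (\<forall>x y. weak_conv_plane (\<lambda>n. s n x y) (\<mu> x y))"
  then show "no_signaling \<mu>"
    using no_signaling_weak_limit[OF assms] Conv_PR_no_signaling by blast
qed

end
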